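(* Let $V$ be a smooth $A[G]$-module and $0<r\le s$ (allowing $s=\infty$). Then the inclusion $V^{U_1(\varpi^r)}\subset V^{U_1(\varpi^s)}$ is $A[X]$-linear, where $X_j$ acts by $U^{(j)}$ on both sides. Moreover, if $V$ is $A$-torsion free, then so is the quotient $V^{U_1(\varpi^s)}/V^{U_1(\varpi^r)}$.
   Context: Let $F/\mathbb{Q}_p$ be finite with ring of integers $\mathcal{O}_F$, uniformizer $\varpi$, residue field $k_F$; let $K/\mathbb{Q}_\ell$ ($\ell\ne p$) be finite with ring of integers $\mathcal{O}$, maximal ideal $\lambda$, residue field $k$; $G=\mathrm{GL}_n(F)$, and assume $\ell\nmid\#\mathrm{GL}_n(k_F)$. $A$ is an $\mathcal{O}$-algebra; smooth $A[G]$-modules are those equal to the union of their invariants under compact open subgroups. For $1\le r<\infty$, the mirahoric subgroup $U_1(\varpi^r)$ consists of $u\in\mathrm{GL}_n(\mathcal{O}_F)$ whose last row is congruent to $(0,\dots,0,1)$ mod $\varpi^r$; $U_1(\varpi^\infty)=P(\mathcal{O}_F)$ is the intersection of all of them, $P$ being the mirabolic subgroup (last row $(0,\dots,0,1)$). For $j=1,\dots,n-1$ let $\alpha_j=\mathrm{diag}(\varpi 1_j,1_{n-j})$ and let $U^{(j)}$ be the double coset operator $[U_1(\varpi^r)\alpha_jU_1(\varpi^r)]$ acting on $V^{U_1(\varpi^r)}$ by $x\mapsto\sum_{\beta}\beta x$, $\beta$ running over $U_1(\varpi^r)\alpha_jU_1(\varpi^r)/U_1(\varpi^r)$. These operators commute,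 so $V^{U_1(\varpi^r)}$ is a module over $A[X]=A[X_1,\dots,X_{n-1}]$ with $X_j\mapsto U^{(j)}$. An $A$-module $M$ is $A$-torsion free if $am=0$ with $a\in A$, $m\in M$ implies $m=0$ or $a$ is a zero-divisor of $A$. *)

theory Defs
  imports "HOL-Analysis.Abstract_Metric_Spaces" "Jordan_Normal_Form.Determinant"
    "HOL-Library.Extended_Nat"
begin

text \<open>v is a normalized discrete valuation on F (its values on 0 are irrelevant).\<close>

definition val_ring :: "('f::field \<Rightarrow> int) \<Rightarrow> 'f set" where
  "val_ring v = {x. x = 0 \<or> 0 \<le> v x}"

text \<open>x is congruent to y modulo the k-th power of the maximal ideal\<close>
definition val_cong :: "('f::field \<Rightarrow> int) \<Rightarrow> int \<Rightarrow> 'f \<Rightarrow> 'f \<Rightarrow> bool" where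
  "val_cong v k x y \<longleftrightarrow> x = y \<or> k \<le> v (x - y)"

definition residue_classes :: "('f::field \<Rightarrow> int) \<Rightarrow> 'f set set" where
  "residue_classes v = (\<lambda>x. {y \<in> val_ring v. val_cong v 1 y x}) ` val_ring v"

definition residue_card :: "('f::field \<Rightarrow> int) \<Rightarrow> nat" where
  "residue_card v = card (residue_classes v)"

text \<open>F is a finite extension of Q_p, presented as a complete, discretely (normalized)
  valued field of characteristic 0 with finite residue field of characteristic p.\<close>
definition p_adic_local_field :: "nat \<Rightarrow> ('f::field_char_0 \<Rightarrow> int) \<Rightarrow> bool" where
  "p_adic_local_field p v \<longleftrightarrow>
     prime p \<and>
     (\<forall>x y. x \<noteq> 0 \<longrightarrow> y \<noteq> 0 \<longrightarrow> v (x * y) = v x + v y) \<and>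
     (\<forall>x y. x \<noteq> 0 \<longrightarrow> y \<noteq> 0 \<longrightarrow> x + y \<noteq> 0 \<longrightarrow> min (v x) (v y) \<le> v (x + y)) \<and>
     (\<forall>k. \<exists>x. x \<noteq> 0 \<and> v x = k) \<and>
     0 < v (of_nat p) \<and>
     finite (residue_classes v) \<and>
     (\<forall>f :: nat \<Rightarrow> 'f. (\<forall>N. \<exists>M. \<forall>m\<ge>M. \<forall>k\<ge>M. val_cong v N (f m) (f k)) \<longrightarrow>
        (\<exists>L. \<forall>N. \<exists>M. \<forall>m\<ge>M. val_cong v N (f m) L))"

text \<open>Order of GL_n over a finite field with q elements.\<close>
definition gl_card :: "nat \<Rightarrow> nat \<Rightarrow> nat" where
  "gl_card q n = (\<Prod>i<n. (q ^ n - q ^ i))"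

text \<open>A structure of O-algebra on A, O the valuation ring of K (valuation w).\<close>
definition O_algebra :: "('k::field \<Rightarrow> int) \<Rightarrow> ('k \<Rightarrow> 'a::comm_ring_1) \<Rightarrow> bool" where
  "O_algebra w \<iota> \<longleftrightarrow> \<iota> 1 = 1 \<and>
     (\<forall>x\<in>val_ring w. \<forall>y\<in>val_ring w. \<iota> (x + y) = \<iota> x + \<iota> y \<and> \<iota> (x * y) = \<iota> x * \<iota> y)"

definition GLn :: "nat \<Rightarrow> 'f::field mat set" where
  "GLn n = {g \<in> carrier_mat n n. det g \<noteq> 0}"

definition val_abs :: "('f::field \<Rightarrow> int) \<Rightarrow> 'f \<Rightarrow> real" where
  "val_abs v x = (if x = 0 then 0 else 2 powr (- real_of_int (v x)))"

definition mat_dist :: "('f::field \<Rightarrow> int) \<Rightarrow> nat \<Rightarrow> 'f mat \<Rightarrow> 'f mat \<Rightarrow> real" where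
  "mat_dist v n A B = (if n = 0 then 0 else
     Max {val_abs v (A $$ (i, j) - B $$ (i, j)) | i j. i < n \<and> j < n})"

definition mat_topology :: "('f::field \<Rightarrow> int) \<Rightarrow> nat \<Rightarrow> 'f mat topology" where
  "mat_topology v n = Metric_space.mtopology (carrier_mat n n) (mat_dist v n)"

definition compact_open_subgroup :: "('f::field \<Rightarrow> int) \<Rightarrow> nat \<Rightarrow> 'f mat set \<Rightarrow> bool" where
  "compact_open_subgroup v n H \<longleftrightarrow>
     H \<subseteq> GLn n \<and> 1\<^sub>m n \<in> H \<and> (\<forall>g\<in>H. \<forall>h\<in>H. g * h \<in> H) \<and>
     (\<forall>g\<in>H. \<exists>h\<in>H. g * h = 1\<^sub>m n) \<and>
     openin (mat_topology v n) H \<and> compactin (mat_topology v n) H"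

definition smooth_rep :: "('f::field \<Rightarrow> int) \<Rightarrow> nat \<Rightarrow> ('a::comm_ring_1 \<Rightarrow> 'v::ab_group_add \<Rightarrow> 'v)
    \<Rightarrow> ('f mat \<Rightarrow> 'v \<Rightarrow> 'v) \<Rightarrow> bool" where
  "smooth_rep v n sm act \<longleftrightarrow>
     Modules.module sm \<and>
     (\<forall>g\<in>GLn n. \<forall>h\<in>GLn n. \<forall>x. act (g * h) x = act g (act h x)) \<and>
     (\<forall>x. act (1\<^sub>m n) x = x) \<and>
     (\<forall>g\<in>GLn n. \<forall>x y. act g (x + y) = act g x + act g y) \<and>
     (\<forall>g\<in>GLn n. \<forall>a x. act g (sm a x) = sm a (act g x)) \<and>
     (\<forall>x. \<exists>H. compact_open_subgroup v n H \<and> (\<forall>h\<in>H. act h x = x))"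

definition invariants :: "('m \<Rightarrow> 'v \<Rightarrow> 'v) \<Rightarrow> 'm set \<Rightarrow> 'v set" where
  "invariants act U = {x. \<forall>u\<in>U. act u x = x}"

definition GLn_O :: "('f::field \<Rightarrow> int) \<Rightarrow> nat \<Rightarrow> 'f mat set" where
  "GLn_O v n = {g \<in> carrier_mat n n. (\<forall>i<n. \<forall>j<n. g $$ (i, j) \<in> val_ring v) \<and>
                  det g \<noteq> 0 \<and> v (det g) = 0}"

definition U1_fin :: "('f::field \<Rightarrow> int) \<Rightarrow> nat \<Rightarrow> nat \<Rightarrow> 'f mat set" where
  "U1_fin v n r = {u \<in> GLn_O v n.
      \<forall>k<n. val_cong v (int r) (u $$ (n - 1, k)) (if k = n - 1 then 1 else 0)}"

definition U1 :: "('f::field \<Rightarrow> int) \<Rightarrow> nat \<Rightarrow> enat \<Rightarrow> 'f mat set" where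
  "U1 v n s = (case s of enat r \<Rightarrow> U1_fin v n r | \<infinity> \<Rightarrow> (\<Inter>r\<in>{1..}. U1_fin v n r))"

definition alpha :: "'f::field \<Rightarrow> nat \<Rightarrow> nat \<Rightarrow> 'f mat" where
  "alpha unif n j = mat n n (\<lambda>(i, k). if i = k then (if i < j then unif else 1) else 0)"

definition double_coset :: "'f::field mat set \<Rightarrow> 'f mat \<Rightarrow> 'f mat set" where
  "double_coset U g = {a * g * b | a b. a \<in> U \<and> b \<in> U}"

definition left_cosets_in :: "'f::field mat set \<Rightarrow> 'f mat set \<Rightarrow> 'f mat set set" where
  "left_cosets_in D U = {(\<lambda>u. h * u) ` U | h. h \<in> D}"

text \<open>[U g U] acting on V^U: x maps to the sum over beta in UgU/U of beta x.\<close>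
definition hecke :: "('f::field mat \<Rightarrow> 'v::ab_group_add \<Rightarrow> 'v) \<Rightarrow> 'f mat set \<Rightarrow> 'f mat \<Rightarrow> 'v \<Rightarrow> 'v" where
  "hecke act U g x = (\<Sum>C\<in>left_cosets_in (double_coset U g) U. act (SOME h. h \<in> C) x)"

definition zero_divisor :: "'a::comm_ring_1 \<Rightarrow> bool" where
  "zero_divisor a \<longleftrightarrow> (\<exists>b. b \<noteq> 0 \<and> a * b = 0)"

definition torsion_free :: "('a::comm_ring_1 \<Rightarrow> 'v::ab_group_add \<Rightarrow> 'v) \<Rightarrow> 'v set \<Rightarrow> bool" where
  "torsion_free sm M \<longleftrightarrow> (\<forall>a. \<forall>x\<in>M. sm a x = 0 \<longrightarrow> x = 0 \<or> zero_divisor a)"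

end

theory Submission
  imports Defs
begin

text \<open>
  The equality of the operators [U \<alpha>_j U] and [W \<alpha>_j W] on V^U is an
  instance of a general fact about nested subgroups W \<subseteq> U and an element g: the
  map sending a left coset hW in WgW/W to hU in UgU/U is a bijection provided
    (conj)   m \<in> W, u \<in> U and m g = g u imply u \<in> W, and
    (factor) every a g with a \<in> U can be written as w g t with w \<in> W, t \<in> U;
  summing the U-invariant vector over corresponding representatives gives equal sums.
\<close>

section \<open>Hecke operators for nested subgroups of GL_n\<close>

lemma GLn_mult:
  assumes "g \<in> GLn n" "h \<in> GLn n"
  shows "g * h \<in> GLn n"
proof -
  have "g \<in> carrier_mat n n" "h \<in> carrier_mat n n" "det g \<noteq> 0" "det h \<noteq> 0"
    using assms unfolding GLn_def by auto
  then show ?thesis unfolding GLn_def by (simp add: det_mult)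
qed

definition mat_subgroup :: "nat \<Rightarrow> 'f::field mat set \<Rightarrow> bool" where
  "mat_subgroup n H \<longleftrightarrow> H \<subseteq> GLn n \<and> 1\<^sub>m n \<in> H \<and> (\<forall>g\<in>H. \<forall>h\<in>H. g * h \<in> H) \<and>
     (\<forall>g\<in>H. \<exists>h\<in>H. g * h = 1\<^sub>m n)"

abbreviation coset :: "'f::field mat set \<Rightarrow> 'f mat \<Rightarrow> 'f mat set" where
  "coset H h \<equiv> (\<lambda>u. h * u) ` H"

context
  fixes n :: nat and H :: "'f::field mat set"
  assumes H: "mat_subgroup n H"
begin

lemma subgroup_GLn: "g \<in> H \<Longrightarrow> g \<in> GLn n"
  using H unfolding mat_subgroup_def by blast

lemma subgroup_carrier: "g \<in> H \<Longrightarrow> g \<in> carrier_mat n n"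
  using subgroup_GLn unfolding GLn_def by blast

lemma subgroup_one: "1\<^sub>m n \<in> H"
  using H unfolding mat_subgroup_def by blast

lemma subgroup_mult: "g \<in> H \<Longrightarrow> h \<in> H \<Longrightarrow> g * h \<in> H"
  using H unfolding mat_subgroup_def by blast

text \<open>Over a field a one-sided inverse of a square matrix is two-sided.\<close>

lemma subgroup_inverse:
  assumes g: "g \<in> H"
  obtains h where "h \<in> H" "g * h = 1\<^sub>m n" "h * g = 1\<^sub>m n"
proof -
  obtain h where h: "h \<in> H" "g * h = 1\<^sub>m n" using H g unfolding mat_subgroup_def by blast
  then have "h * g = 1\<^sub>m n"
    using mat_mult_left_right_inverse[OF subgroup_carrier[OF g] subgroup_carrier[OF h(1)]] by blast
  with h that show ?thesis by blast
qed

lemma coset_absorb: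
  assumes h: "h \<in> carrier_mat n n" and g: "g \<in> H"
  shows "coset H (h * g) = coset H h"
proof
  have G: "g \<in> carrier_mat n n" using g by (rule subgroup_carrier)
  show "coset H (h * g) \<subseteq> coset H h"
  proof
    fix y assume "y \<in> coset H (h * g)"
    then obtain u where u: "u \<in> H" "y = h * g * u" by blast
    then have "y = h * (g * u)" using assoc_mult_mat[OF h G subgroup_carrier[OF u(1)]] by simp
    then show "y \<in> coset H h" using subgroup_mult[OF g u(1)] by blast
  qed
  obtain gi where gi: "gi \<in> H" "g * gi = 1\<^sub>m n" by (rule subgroup_inverse[OF g])
  have GI: "gi \<in> carrier_mat n n" using gi(1) by (rule subgroup_carrier)
  show "coset H h \<subseteq> coset H (h * g)"
  proof
    fix y assume "y \<in> coset H h"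
    then obtain u where u: "u \<in> H" "y = h * u" by blast
    have U: "u \<in> carrier_mat n n" using u(1) by (rule subgroup_carrier)
    have "h * g * (gi * u) = h * ((g * gi) * u)"
      using assoc_mult_mat[OF h G mult_carrier_mat[OF GI U]] assoc_mult_mat[OF G GI U] by simp
    then have "y = h * g * (gi * u)" using gi(2) U u(2) by simp
    then show "y \<in> coset H (h * g)" using subgroup_mult[OF gi(1) u(1)] by blast
  qed
qed

lemma coset_eq_iff:
  assumes "h \<in> carrier_mat n n" "h' \<in> carrier_mat n n"
  shows "coset H h' = coset H h \<longleftrightarrow> (\<exists>u\<in>H. h' = h * u)"
proof
  assume "coset H h' = coset H h"
  moreover have "h' \<in> coset H h'"
    using image_eqI[of h' "\<lambda>u. h' * u" "1\<^sub>m n"] subgroup_one assms(2) by simp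
  ultimately show "\<exists>u\<in>H. h' = h * u" by blast
next
  assume "\<exists>u\<in>H. h' = h * u"
  then show "coset H h' = coset H h" using coset_absorb[OF assms(1)] by auto
qed

text \<open>On H-invariant vectors, any representative of hH acts like h; this is why the
  Hecke operator does not depend on the choice of representatives.\<close>

lemma act_coset_representative:
  assumes law: "\<forall>g\<in>GLn n. \<forall>h\<in>GLn n. \<forall>x. act (g * h) x = act g (act h x)"
    and h: "h \<in> GLn n" and x: "x \<in> invariants act H"
  shows "act (SOME c. c \<in> coset H h) x = act h x"
proof -
  have "\<exists>c. c \<in> coset H h" using subgroup_one by blast
  then have "(SOME c. c \<in> coset H h) \<in> coset H h" by (rule someI_ex)
  then obtain u where u: "u \<in> H" and c: "(SOME c. c \<in> coset H h) = h * u" by blast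
  have "act (h * u) x = act h (act u x)" using law h subgroup_GLn[OF u] by blast
  also have "act u x = x" using x u unfolding invariants_def by blast
  finally show ?thesis unfolding c .
qed

lemma double_coset_GLn:
  assumes "g \<in> GLn n"
  shows "double_coset H g \<subseteq> GLn n"
proof
  fix h assume "h \<in> double_coset H g"
  then obtain a b where "a \<in> H" "b \<in> H" "h = a * g * b" unfolding double_coset_def by blast
  then show "h \<in> GLn n" using assms by (simp add: GLn_mult subgroup_GLn)
qed

end

lemma coset_coarsen:
  assumes W: "mat_subgroup n W" and U: "mat_subgroup n U" and WU: "W \<subseteq> U"
    and h: "h \<in> carrier_mat n n"
  shows "(\<Union>c\<in>coset W h. coset U c) = coset U h"
proof -
  have "(\<Union>c\<in>coset W h. coset U c) = (\<Union>w\<in>W. coset U (h * w))" by auto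
  also have "\<dots> = (\<Union>w\<in>W. coset U h)"
    using coset_absorb[OF U h] WU by (intro SUP_cong) auto
  also have "\<dots> = coset U h" using subgroup_one[OF W] by blast
  finally show ?thesis .
qed

context
  fixes n :: nat and W U :: "'f::field mat set" and g :: "'f mat"
  assumes W: "mat_subgroup n W" and U: "mat_subgroup n U" and WU: "W \<subseteq> U"
    and g: "g \<in> GLn n"
begin

text \<open>Condition (conj) makes the map hW \<mapsto> hU injective on WgW/W.\<close>

lemma coset_refine_inj:
  assumes conj: "\<And>m u. m \<in> W \<Longrightarrow> u \<in> U \<Longrightarrow> m * g = g * u \<Longrightarrow> u \<in> W"
    and h: "h \<in> double_coset W g" and h': "h' \<in> double_coset W g"
    and eq: "coset U h' = coset U h"
  shows "coset W h' = coset W h"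
proof -
  have G: "g \<in> carrier_mat n n" using g unfolding GLn_def by blast
  obtain a b where a: "a \<in> W" and b: "b \<in> W" and he: "h = a * g * b"
    using h unfolding double_coset_def by blast
  obtain a' b' where a': "a' \<in> W" and b': "b' \<in> W" and he': "h' = a' * g * b'"
    using h' unfolding double_coset_def by blast
  obtain ai where ai: "ai \<in> W" "ai * a = 1\<^sub>m n" by (rule subgroup_inverse[OF W a])
  obtain bi where bi: "bi \<in> W" "bi * b = 1\<^sub>m n" by (rule subgroup_inverse[OF W b])
  obtain bi' where bi': "bi' \<in> W" "b' * bi' = 1\<^sub>m n" by (rule subgroup_inverse[OF W b'])
  note carr = subgroup_carrier[OF W]
  have H: "h \<in> carrier_mat n n" "h' \<in> carrier_mat n n"
    using he he' carr[OF a] carr[OF b] carr[OF a'] carr[OF b'] G by auto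
  obtain u where u: "u \<in> U" and hu: "h' = h * u"
    using eq coset_eq_iff[OF U H] by blast
  have Uc: "u \<in> carrier_mat n n" using subgroup_carrier[OF U u] .
  define m where "m = ai * a'"
  define c where "c = b * u * bi'"
  have "m * g = ai * (a' * g * b') * bi'"
    using carr[OF ai(1)] carr[OF a'] G carr[OF b'] carr[OF bi'(1)] bi'(2)
    by (simp add: m_def assoc_mult_mat[of _ n n _ n _ n])
  also have "\<dots> = ai * (a * g * b * u) * bi'" using he he' hu by simp
  also have "\<dots> = (ai * a) * g * (b * u * bi')"
    using carr[OF ai(1)] carr[OF a] G carr[OF b] Uc carr[OF bi'(1)]
    by (simp add: assoc_mult_mat[of _ n n _ n _ n])
  finally have "m * g = g * c" using ai(2) G by (simp add: c_def)
  moreover have "m \<in> W" unfolding m_def by (rule subgroup_mult[OF W ai(1) a'])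
  moreover have "c \<in> U" unfolding c_def using WU b bi'(1) u subgroup_mult[OF U] by blast
  ultimately have cW: "c \<in> W" using conj by blast
  have "bi * c * b' = (bi * b) * u * (bi' * b')"
    using carr[OF bi(1)] carr[OF b] Uc carr[OF bi'(1)] carr[OF b']
    by (simp add: c_def assoc_mult_mat[of _ n n _ n _ n])
  also have "\<dots> = u"
    using bi(2) mat_mult_left_right_inverse[OF carr[OF b'] carr[OF bi'(1)] bi'(2)] Uc by simp
  finally have "u \<in> W" using subgroup_mult[OF W subgroup_mult[OF W bi(1) cW] b'] by simp
  then show ?thesis unfolding hu by (rule coset_absorb[OF W H(1)])
qed

text \<open>Condition (factor) makes the map hW \<mapsto> hU surjective onto UgU/U.\<close>

lemma coset_refine_surj:
  assumes factor: "\<And>a. a \<in> U \<Longrightarrow> \<exists>w\<in>W. \<exists>t\<in>U. a * g = w * g * t"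
    and h: "h \<in> double_coset U g"
  shows "\<exists>h0\<in>double_coset W g. coset U h = coset U h0"
proof -
  have G: "g \<in> carrier_mat n n" using g unfolding GLn_def by blast
  obtain a b where a: "a \<in> U" and b: "b \<in> U" and he: "h = a * g * b"
    using h unfolding double_coset_def by blast
  obtain w t where w: "w \<in> W" and t: "t \<in> U" and wt: "a * g = w * g * t"
    using factor[OF a] by blast
  have Wc: "w \<in> carrier_mat n n" using subgroup_carrier[OF W w] .
  have "h = (w * g) * (t * b)"
    using he wt Wc G subgroup_carrier[OF U t] subgroup_carrier[OF U b]
    by (simp add: assoc_mult_mat[of _ n n _ n _ n])
  then have "coset U h = coset U (w * g)"
    using coset_absorb[OF U _ subgroup_mult[OF U t b]] Wc G by simp
  moreover have "w * g \<in> double_coset W g"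
    unfolding double_coset_def using w subgroup_one[OF W] Wc G by force
  ultimately show ?thesis by blast
qed

lemma hecke_restrict:
  assumes conj: "\<And>m u. m \<in> W \<Longrightarrow> u \<in> U \<Longrightarrow> m * g = g * u \<Longrightarrow> u \<in> W"
    and factor: "\<And>a. a \<in> U \<Longrightarrow> \<exists>w\<in>W. \<exists>t\<in>U. a * g = w * g * t"
    and law: "\<forall>g\<in>GLn n. \<forall>h\<in>GLn n. \<forall>x. act (g * h) x = act g (act h x)"
    and x: "x \<in> invariants act U"
  shows "hecke act U g x = hecke act W g x"
proof -
  define S where "S = left_cosets_in (double_coset W g) W"
  define T where "T = left_cosets_in (double_coset U g) U"
  define f where "f C = (\<Union>c\<in>C. coset U c)" for C
  define \<phi> where "\<phi> C = act (SOME h. h \<in> C) x" for C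
  have xW: "x \<in> invariants act W" using x WU unfolding invariants_def by blast
  have DW: "h \<in> GLn n" "h \<in> carrier_mat n n" if "h \<in> double_coset W g" for h
    using double_coset_GLn[OF W g] that unfolding GLn_def by auto
  have f_coset: "f (coset W h) = coset U h" if "h \<in> double_coset W g" for h
    unfolding f_def by (rule coset_coarsen[OF W U WU DW(2)[OF that]])
  have DWU: "double_coset W g \<subseteq> double_coset U g"
    using WU unfolding double_coset_def by blast
  have bij: "bij_betw f S T"
  proof (rule bij_betw_imageI)
    show "inj_on f S"
    proof (rule inj_onI)
      fix C C' assume "C \<in> S" "C' \<in> S" and eq: "f C = f C'"
      then obtain h h' where h: "h \<in> double_coset W g" and C: "C = coset W h"
        and h': "h' \<in> double_coset W g" and C': "C' = coset W h'"
        unfolding S_def left_cosets_in_def by blast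
      have "coset U h' = coset U h" using eq unfolding C C' f_coset[OF h] f_coset[OF h'] ..
      then show "C = C'" unfolding C C' using coset_refine_inj[OF conj h h'] by simp
    qed
    show "f ` S = T"
    proof
      show "f ` S \<subseteq> T"
        using f_coset DWU unfolding S_def T_def left_cosets_in_def by auto
      show "T \<subseteq> f ` S"
      proof
        fix D assume "D \<in> T"
        then obtain h where h: "h \<in> double_coset U g" and D: "D = coset U h"
          unfolding T_def left_cosets_in_def by blast
        obtain h0 where h0: "h0 \<in> double_coset W g" and "coset U h = coset U h0"
          using coset_refine_surj[OF factor h] by blast
        then have "D = f (coset W h0)" unfolding D f_coset[OF h0] by blast
        then show "D \<in> f ` S" using h0 unfolding S_def left_cosets_in_def by blast
      qed
    qed
  qed
  have "\<phi> (f C) = \<phi> C" if CS: "C \<in> S" for C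
  proof -
    obtain h where h: "h \<in> double_coset W g" and C: "C = coset W h"
      using CS unfolding S_def left_cosets_in_def by blast
    show ?thesis unfolding C f_coset[OF h] \<phi>_def
      using act_coset_representative[OF U law DW(1)[OF h] x]
        act_coset_representative[OF W law DW(1)[OF h] xW] by simp
  qed
  then have "hecke act W g x = (\<Sum>C\<in>S. \<phi> (f C))"
    unfolding hecke_def S_def \<phi>_def by simp
  also have "\<dots> = (\<Sum>C\<in>T. \<phi> C)" by (rule sum.reindex_bij_betw[OF bij])
  finally show ?thesis unfolding hecke_def T_def \<phi>_def by simp
qed

end

section \<open>Valuations\<close>

definition valuation :: "('f::field \<Rightarrow> int) \<Rightarrow> bool" where
  "valuation v \<longleftrightarrow> (\<forall>x y. x \<noteq> 0 \<longrightarrow> y \<noteq> 0 \<longrightarrow> v (x * y) = v x + v y) \<and>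
     (\<forall>x y. x \<noteq> 0 \<longrightarrow> y \<noteq> 0 \<longrightarrow> x + y \<noteq> 0 \<longrightarrow> min (v x) (v y) \<le> v (x + y))"

text \<open>The ideal of elements of valuation at least s, for s \<in> \<nat> \<union> {\<infinity>}; at s = \<infinity> it is {0}.\<close>

definition val_ideal :: "('f::field \<Rightarrow> int) \<Rightarrow> enat \<Rightarrow> 'f set" where
  "val_ideal v s = {x. x = 0 \<or> (\<forall>r. enat r \<le> s \<longrightarrow> int r \<le> v x)}"

lemma valuation_of_local_field: "p_adic_local_field p v \<Longrightarrow> valuation v"
  unfolding p_adic_local_field_def valuation_def by blast

lemma val_ideal_zero [simp]: "0 \<in> val_ideal v s"
  unfolding val_ideal_def by simp

lemma val_ideal_antimono: "s \<le> s' \<Longrightarrow> val_ideal v s' \<subseteq> val_ideal v s"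
  unfolding val_ideal_def using order_trans by blast

lemma val_ideal_infinity: "val_ideal v \<infinity> = {0}"
proof -
  have "\<not> (\<forall>r. int r \<le> v x)" for x
  proof
    assume "\<forall>r. int r \<le> v x"
    then have "int (nat (v x) + 1) \<le> v x" by blast
    then show False by linarith
  qed
  then show ?thesis unfolding val_ideal_def by auto
qed

lemma val_cong_iff_val_ideal: "val_cong v (int r) x y \<longleftrightarrow> x - y \<in> val_ideal v (enat r)"
  unfolding val_cong_def val_ideal_def by force

lemma val_cong_all_iff: "(\<forall>r\<in>{1::nat..}. val_cong v (int r) x y) \<longleftrightarrow> x = y"
proof
  assume all: "\<forall>r\<in>{1::nat..}. val_cong v (int r) x y"
  show "x = y"
  proof (rule ccontr)
    assume "x \<noteq> y"
    then have "int (nat (v (x - y)) + 1) \<le> v (x - y)"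
      using all[rule_format, of "nat (v (x - y)) + 1"] unfolding val_cong_def by auto
    then show False by linarith
  qed
qed (simp add: val_cong_def)

context
  fixes v :: "'f::field \<Rightarrow> int"
  assumes val: "valuation v"
begin

lemma val_mult: "x \<noteq> 0 \<Longrightarrow> y \<noteq> 0 \<Longrightarrow> v (x * y) = v x + v y"
  using val unfolding valuation_def by blast

lemma val_ultrametric: "x \<noteq> 0 \<Longrightarrow> y \<noteq> 0 \<Longrightarrow> x + y \<noteq> 0 \<Longrightarrow> min (v x) (v y) \<le> v (x + y)"
  using val unfolding valuation_def by blast

lemma val_one: "v 1 = 0"
  using val_mult[of 1 1] by simp

lemma val_minus_one: "v (- 1) = 0"
  using val_mult[of "- 1" "- 1"] val_one by simp

lemma val_uminus: "x \<noteq> 0 \<Longrightarrow> v (- x) = v x"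
  using val_mult[of "- 1" x] val_minus_one by simp

lemma val_ideal_add:
  assumes "x \<in> val_ideal v s" "y \<in> val_ideal v s"
  shows "x + y \<in> val_ideal v s"
proof (cases "x = 0 \<or> y = 0 \<or> x + y = 0")
  case False
  then have "min (v x) (v y) \<le> v (x + y)" by (intro val_ultrametric) auto
  then show ?thesis using assms False unfolding val_ideal_def by force
qed (use assms in auto)

lemma val_ideal_uminus: "x \<in> val_ideal v s \<Longrightarrow> - x \<in> val_ideal v s"
  unfolding val_ideal_def using val_uminus by (cases "x = 0") auto

lemma val_ring_eq: "val_ring v = val_ideal v 0"
  unfolding val_ring_def val_ideal_def by (auto simp: zero_enat_def)

lemma val_ideal_mult:
  assumes x: "x \<in> val_ideal v s" and y: "y \<in> val_ring v"
  shows "x * y \<in> val_ideal v s"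
proof (cases "x = 0 \<or> y = 0")
  case False
  then have "v (x * y) = v x + v y" "0 \<le> v y"
    using val_mult y unfolding val_ring_def by auto
  then show ?thesis using x False unfolding val_ideal_def by force
qed auto

lemma val_ideal_sum:
  "finite A \<Longrightarrow> (\<And>a. a \<in> A \<Longrightarrow> f a \<in> val_ideal v s) \<Longrightarrow> sum f A \<in> val_ideal v s"
  by (induction A rule: finite_induct) (simp_all add: val_ideal_add)

lemma val_ring_zero [simp]: "0 \<in> val_ring v"
  unfolding val_ring_def by simp

lemma val_ring_one [simp]: "1 \<in> val_ring v"
  unfolding val_ring_def using val_one by simp

lemma val_ring_minus_one [simp]: "- 1 \<in> val_ring v"
  unfolding val_ring_def using val_minus_one by simp

lemma val_ring_mult: "x \<in> val_ring v \<Longrightarrow> y \<in> val_ring v \<Longrightarrow> x * y \<in> val_ring v"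
  using val_ideal_mult[of x 0 y] unfolding val_ring_eq by simp

lemma val_ring_sum:
  "finite A \<Longrightarrow> (\<And>a. a \<in> A \<Longrightarrow> f a \<in> val_ring v) \<Longrightarrow> sum f A \<in> val_ring v"
  unfolding val_ring_eq by (rule val_ideal_sum)

lemma val_ring_prod:
  "finite A \<Longrightarrow> (\<And>a. a \<in> A \<Longrightarrow> f a \<in> val_ring v) \<Longrightarrow> prod f A \<in> val_ring v"
  by (induction A rule: finite_induct) (simp_all add: val_ring_mult)

lemma val_ring_power: "x \<in> val_ring v \<Longrightarrow> x ^ k \<in> val_ring v"
  by (induction k) (auto intro: val_ring_mult)

lemma val_unit_inverse:
  assumes "d \<noteq> 0" "v d = 0"
  shows "1 / d \<in> val_ring v" "v (1 / d) = 0"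
proof -
  have "v (d * (1 / d)) = v d + v (1 / d)" using val_mult[of d "1 / d"] assms by simp
  then show "v (1 / d) = 0" using assms val_one by simp
  then show "1 / d \<in> val_ring v" unfolding val_ring_def by simp
qed

lemma val_one_plus_ideal:
  assumes y: "y \<in> val_ideal v 1"
  shows "1 + y \<noteq> 0" "v (1 + y) = 0"
proof -
  have vy: "y = 0 \<or> 1 \<le> v y"
    using y unfolding val_ideal_def by (auto simp: one_enat_def)
  show ne: "1 + y \<noteq> 0"
  proof
    assume "1 + y = 0"
    then have "y = - 1" by (simp add: add_eq_0_iff)
    then show False using vy val_minus_one by simp
  qed
  show "v (1 + y) = 0"
  proof (cases "y = 0")
    case False
    then have "min (v 1) (v y) \<le> v (1 + y)"
      using val_ultrametric[of 1 y] ne by simp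
    moreover have "min (v (1 + y)) (v (- y)) \<le> v (1 + y + - y)"
      using val_ultrametric[of "1 + y" "- y"] ne False by simp
    ultimately show ?thesis using val_one val_uminus[OF False] vy False by simp
  qed (simp add: val_one)
qed

end

section \<open>Integral matrices\<close>

lemma mult_mat_entry:
  assumes "A \<in> carrier_mat n m" "B \<in> carrier_mat m p" "i < n" "k < p"
  shows "(A * B) $$ (i, k) = (\<Sum>l<m. A $$ (i, l) * B $$ (l, k))"
  using assms by (auto simp: scalar_prod_def atLeast0LessThan intro!: sum.cong)

definition adj_inverse :: "'f::field mat \<Rightarrow> 'f mat" where
  "adj_inverse A = (1 / det A) \<cdot>\<^sub>m adj_mat A"

lemma adj_inverse:
  assumes A: "A \<in> carrier_mat n n" and d: "det A \<noteq> 0"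
  shows "adj_inverse A \<in> carrier_mat n n" "A * adj_inverse A = 1\<^sub>m n"
proof -
  note adj = adj_mat[OF A]
  show "adj_inverse A \<in> carrier_mat n n" unfolding adj_inverse_def using adj by simp
  have "A * adj_inverse A = (1 / det A) \<cdot>\<^sub>m (A * adj_mat A)"
    unfolding adj_inverse_def by (rule mult_smult_distrib[OF A adj(1)])
  also have "\<dots> = 1\<^sub>m n" unfolding adj(2) using d by (auto intro!: eq_matI)
  finally show "A * adj_inverse A = 1\<^sub>m n" .
qed

context
  fixes v :: "'f::field \<Rightarrow> int"
  assumes val: "valuation v"
begin

lemma det_integral:
  assumes A: "A \<in> carrier_mat n n"
    and int: "\<And>i j. i < n \<Longrightarrow> j < n \<Longrightarrow> A $$ (i, j) \<in> val_ring v"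
  shows "det A \<in> val_ring v"
proof -
  have "signof p * (\<Prod>i = 0..<n. A $$ (i, p i)) \<in> val_ring v" if p: "p permutes {0..<n}" for p
  proof -
    have "(signof p :: 'f) \<in> val_ring v"
      by (cases p rule: sign_cases) (simp_all add: val_ring_one[OF val] val_ring_minus_one[OF val])
    moreover have "(\<Prod>i = 0..<n. A $$ (i, p i)) \<in> val_ring v"
      using p permutes_in_image[OF p] by (intro val_ring_prod[OF val] int) auto
    ultimately show ?thesis by (rule val_ring_mult[OF val])
  qed
  then show ?thesis unfolding det_def'[OF A]
    by (intro val_ring_sum[OF val]) (auto intro: finite_permutations)
qed

lemma mult_integral:
  assumes A: "A \<in> carrier_mat n n" and B: "B \<in> carrier_mat n n"
    and intA: "\<And>i j. i < n \<Longrightarrow> j < n \<Longrightarrow> A $$ (i, j) \<in> val_ring v"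
    and intB: "\<And>i j. i < n \<Longrightarrow> j < n \<Longrightarrow> B $$ (i, j) \<in> val_ring v"
    and ij: "i < n" "j < n"
  shows "(A * B) $$ (i, j) \<in> val_ring v"
  unfolding mult_mat_entry[OF A B ij]
  by (rule val_ring_sum[OF val]) (auto intro!: val_ring_mult[OF val] intA intB ij)

lemma GLn_O_mult:
  assumes "A \<in> GLn_O v n" "B \<in> GLn_O v n"
  shows "A * B \<in> GLn_O v n"
proof -
  have A: "A \<in> carrier_mat n n" and B: "B \<in> carrier_mat n n"
    and d: "det A \<noteq> 0" "det B \<noteq> 0" "v (det A) = 0" "v (det B) = 0"
    using assms unfolding GLn_O_def by auto
  have "det (A * B) = det A * det B" by (rule det_mult[OF A B])
  then show ?thesis
    using A B d mult_integral[OF A B] assms val_mult[OF val, of "det A" "det B"]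
    unfolding GLn_O_def by auto
qed

lemma one_GLn_O: "1\<^sub>m n \<in> GLn_O v n"
  unfolding GLn_O_def using val_one[OF val] val_ring_one[OF val] val_ring_zero[OF val] by auto

text \<open>The adjugate formula shows that an integral matrix with unit determinant
  has an integral inverse.\<close>

lemma adj_inverse_GLn_O:
  assumes "A \<in> GLn_O v n"
  shows "adj_inverse A \<in> GLn_O v n"
proof -
  have A: "A \<in> carrier_mat n n"
    and intA: "\<And>i j. i < n \<Longrightarrow> j < n \<Longrightarrow> A $$ (i, j) \<in> val_ring v"
    and d: "det A \<noteq> 0" "v (det A) = 0"
    using assms unfolding GLn_O_def by auto
  note I = adj_inverse[OF A d(1)]
  have int: "adj_inverse A $$ (i, j) \<in> val_ring v" if ij: "i < n" "j < n" for i j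
  proof -
    have "det (mat_delete A j i) \<in> val_ring v"
      using mat_delete_carrier[OF A] A
      by (intro det_integral) (auto simp: mat_delete_def intro!: intA)
    then have "cofactor A j i \<in> val_ring v" unfolding cofactor_def
      using val_ring_mult[OF val] val_ring_power[OF val val_ring_minus_one[OF val]] by blast
    moreover have "adj_inverse A $$ (i, j) = (1 / det A) * cofactor A j i"
      unfolding adj_inverse_def adj_mat_def using A ij by simp
    ultimately show ?thesis using val_ring_mult[OF val] val_unit_inverse[OF val d] by metis
  qed
  have prod: "det A * det (adj_inverse A) = 1" using det_mult[OF A I(1)] I(2) by simp
  then have nz: "det (adj_inverse A) \<noteq> 0" by auto
  have "v (det A * det (adj_inverse A)) = v (det A) + v (det (adj_inverse A))"
    by (rule val_mult[OF val d(1) nz])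
  then show ?thesis unfolding GLn_O_def using I(1) int d nz prod val_one[OF val] by auto
qed

end

section \<open>Mirahoric subgroups\<close>

definition mirahoric :: "('f::field \<Rightarrow> int) \<Rightarrow> nat \<Rightarrow> enat \<Rightarrow> 'f mat set" where
  "mirahoric v n s = {u \<in> GLn_O v n.
     \<forall>k<n. u $$ (n - 1, k) - (if k = n - 1 then 1 else 0) \<in> val_ideal v s}"

lemma mirahoric_antimono: "s \<le> s' \<Longrightarrow> mirahoric v n s' \<subseteq> mirahoric v n s"
  unfolding mirahoric_def using val_ideal_antimono by blast

lemma U1_eq_mirahoric: "U1 v n s = mirahoric v n s"
proof (cases s)
  case (enat r)
  then show ?thesis
    unfolding U1_def U1_fin_def mirahoric_def by (simp add: val_cong_iff_val_ideal)
next
  case infinity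
  have "u \<in> U1 v n \<infinity> \<longleftrightarrow> u \<in> mirahoric v n \<infinity>" for u
  proof -
    have "u \<in> U1 v n \<infinity> \<longleftrightarrow> u \<in> GLn_O v n \<and>
        (\<forall>k<n. \<forall>r\<in>{1::nat..}. val_cong v (int r) (u $$ (n - 1, k)) (if k = n - 1 then 1 else 0))"
      unfolding U1_def U1_fin_def by auto
    also have "\<dots> \<longleftrightarrow> u \<in> mirahoric v n \<infinity>"
      unfolding val_cong_all_iff mirahoric_def val_ideal_infinity by simp
    finally show ?thesis .
  qed
  then show ?thesis using infinity by blast
qed

text \<open>Last row of a product, written so that the deviation of the first factor's last row
  from the unit row appears linearly.\<close>

lemma last_row_mult:
  fixes A B :: "'a::comm_ring_1 mat"
  assumes A: "A \<in> carrier_mat n n" and B: "B \<in> carrier_mat n n" and k: "k < n"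
  shows "(A * B) $$ (n - 1, k) =
    (\<Sum>l<n. (A $$ (n - 1, l) - (if l = n - 1 then 1 else 0)) * B $$ (l, k)) + B $$ (n - 1, k)"
proof -
  have "(\<Sum>l<n. (if l = n - 1 then 1 else 0) * B $$ (l, k))
      = (\<Sum>l<n. if l = n - 1 then B $$ (l, k) else 0)"
    by (rule sum.cong) auto
  also have "\<dots> = B $$ (n - 1, k)" using k by (simp add: sum.delta')
  finally have "(\<Sum>l<n. (if l = n - 1 then 1 else 0) * B $$ (l, k)) = B $$ (n - 1, k)" .
  then show ?thesis
    using mult_mat_entry[OF A B _ k, of "n - 1"] k
    by (simp add: left_diff_distrib sum_subtractf)
qed

definition last_row_mat :: "nat \<Rightarrow> (nat \<Rightarrow> 'f::field) \<Rightarrow> 'f mat" where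
  "last_row_mat n c = mat n n (\<lambda>(i, k). if i = n - 1 then c k else if i = k then 1 else 0)"

lemma last_row_mat_carrier: "last_row_mat n c \<in> carrier_mat n n"
  unfolding last_row_mat_def by simp

lemma det_last_row_mat:
  assumes n: "1 \<le> n"
  shows "det (last_row_mat n c) = c (n - 1)"
proof -
  have "det (last_row_mat n c) = prod_list (diag_mat (last_row_mat n c))"
    by (rule det_lower_triangular[OF _ last_row_mat_carrier]) (auto simp: last_row_mat_def)
  also have "\<dots> = (\<Prod>i = 0..<n. if i = n - 1 then c (n - 1) else 1)"
    unfolding prod_list_diag_prod by (intro prod.cong) (auto simp: last_row_mat_def)
  also have "\<dots> = c (n - 1)" using n by (simp add: prod.delta')
  finally show ?thesis .
qed

context
  fixes v :: "'f::field \<Rightarrow> int" and n :: nat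
  assumes val: "valuation v" and n: "1 \<le> n"
begin

lemma mirahoric_carrier: "A \<in> mirahoric v n s \<Longrightarrow> A \<in> carrier_mat n n"
  unfolding mirahoric_def GLn_O_def by auto

lemma mirahoric_integral:
  "A \<in> mirahoric v n s \<Longrightarrow> l < n \<Longrightarrow> k < n \<Longrightarrow> A $$ (l, k) \<in> val_ring v"
  unfolding mirahoric_def GLn_O_def by auto

lemma last_row_mult_cong:
  assumes a: "A \<in> mirahoric v n s" and B: "B \<in> GLn_O v n" and k: "k < n"
  shows "(A * B) $$ (n - 1, k) - B $$ (n - 1, k) \<in> val_ideal v s"
proof -
  have A: "A \<in> carrier_mat n n" and Bc: "B \<in> carrier_mat n n"
    using a B mirahoric_carrier unfolding GLn_O_def by auto
  have "(\<Sum>l<n. (A $$ (n - 1, l) - (if l = n - 1 then 1 else 0)) * B $$ (l, k)) \<in> val_ideal v s"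
    using a B k unfolding mirahoric_def GLn_O_def
    by (intro val_ideal_sum[OF val] val_ideal_mult[OF val]) auto
  then show ?thesis unfolding last_row_mult[OF A Bc k] by simp
qed

lemma mirahoric_mult:
  assumes a: "A \<in> mirahoric v n s" and b: "B \<in> mirahoric v n s"
  shows "A * B \<in> mirahoric v n s"
proof -
  have B: "B \<in> GLn_O v n" using b unfolding mirahoric_def by blast
  have "(A * B) $$ (n - 1, k) - (if k = n - 1 then 1 else 0) \<in> val_ideal v s" if k: "k < n" for k
  proof -
    have "B $$ (n - 1, k) - (if k = n - 1 then 1 else 0) \<in> val_ideal v s"
      using b k unfolding mirahoric_def by blast
    from val_ideal_add[OF val last_row_mult_cong[OF a B k] this] show ?thesis by simp
  qed
  then show ?thesis using GLn_O_mult[OF val] a b unfolding mirahoric_def by auto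
qed

lemma mirahoric_inverse:
  assumes a: "A \<in> mirahoric v n s"
  shows "adj_inverse A \<in> mirahoric v n s"
proof -
  have A: "A \<in> carrier_mat n n" and g: "A \<in> GLn_O v n" and d: "det A \<noteq> 0"
    using a unfolding mirahoric_def GLn_O_def by auto
  note I = adj_inverse[OF A d]
  have gi: "adj_inverse A \<in> GLn_O v n" by (rule adj_inverse_GLn_O[OF val g])
  have "adj_inverse A $$ (n - 1, k) - (if k = n - 1 then 1 else 0) \<in> val_ideal v s"
    if k: "k < n" for k
  proof -
    have "(A * adj_inverse A) $$ (n - 1, k) = (if k = n - 1 then 1 else 0)"
      using I(2) k n by simp
    then show ?thesis
      using val_ideal_uminus[OF val last_row_mult_cong[OF a gi k]] by simp
  qed
  then show ?thesis using gi unfolding mirahoric_def by auto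
qed

lemma mirahoric_subgroup: "mat_subgroup n (mirahoric v n s)"
  unfolding mat_subgroup_def
proof (intro conjI ballI)
  show "mirahoric v n s \<subseteq> GLn n"
    unfolding mirahoric_def GLn_O_def GLn_def by auto
  show "1\<^sub>m n \<in> mirahoric v n s"
    unfolding mirahoric_def using one_GLn_O[OF val] n by auto
  show "A * B \<in> mirahoric v n s" if "A \<in> mirahoric v n s" "B \<in> mirahoric v n s" for A B
    using mirahoric_mult that by blast
  show "\<exists>B\<in>mirahoric v n s. A * B = 1\<^sub>m n" if a: "A \<in> mirahoric v n s" for A
  proof
    have "det A \<noteq> 0" using a unfolding mirahoric_def GLn_O_def by auto
    then show "A * adj_inverse A = 1\<^sub>m n" by (rule adj_inverse(2)[OF mirahoric_carrier[OF a]])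
  qed (rule mirahoric_inverse[OF a])
qed

text \<open>A matrix carrying a last row of level r (r \<ge> 1) lies in the mirahoric group:
  its determinant is the last entry, a unit.\<close>

lemma last_row_mat_mirahoric:
  assumes r: "1 \<le> r" and int: "\<And>k. k < n \<Longrightarrow> c k \<in> val_ring v"
    and cong: "\<And>k. k < n \<Longrightarrow> c k - (if k = n - 1 then 1 else 0) \<in> val_ideal v (enat r)"
  shows "last_row_mat n c \<in> mirahoric v n (enat r)"
proof -
  have nl: "n - 1 < n" using n by simp
  have "val_ideal v (enat r) \<subseteq> val_ideal v 1"
    using val_ideal_antimono[of 1 "enat r"] r by (simp add: one_enat_def)
  then have "c (n - 1) - 1 \<in> val_ideal v 1" using cong[OF nl] by auto
  then have "det (last_row_mat n c) \<noteq> 0" "v (det (last_row_mat n c)) = 0"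
    using val_one_plus_ideal[OF val, of "c (n - 1) - 1"] unfolding det_last_row_mat[OF n] by auto
  then have "last_row_mat n c \<in> GLn_O v n"
    unfolding GLn_O_def using last_row_mat_carrier int val_ring_zero[OF val] val_ring_one[OF val]
    by (auto simp: last_row_mat_def)
  then show ?thesis unfolding mirahoric_def using cong nl by (auto simp: last_row_mat_def)
qed

text \<open>Dividing a matrix of level r by the matrix carrying its last row leaves a matrix
  whose last row is exactly the unit row.\<close>

lemma mirahoric_last_row_factor:
  assumes a: "a \<in> mirahoric v n (enat r)" and r: "1 \<le> r"
  shows "\<exists>w\<in>mirahoric v n \<infinity>. a = w * last_row_mat n (\<lambda>k. a $$ (n - 1, k))"
proof -
  define t0 where "t0 = last_row_mat n (\<lambda>k. a $$ (n - 1, k))"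
  define w where "w = a * adj_inverse t0"
  have nl: "n - 1 < n" using n by simp
  have A: "a \<in> carrier_mat n n" by (rule mirahoric_carrier[OF a])
  have "a $$ (n - 1, k) - (if k = n - 1 then 1 else 0) \<in> val_ideal v (enat r)" if "k < n" for k
    using a that unfolding mirahoric_def by auto
  then have t0: "t0 \<in> mirahoric v n (enat r)" unfolding t0_def
    using last_row_mat_mirahoric[OF r, where c="\<lambda>k. a $$ (n - 1, k)"] mirahoric_integral[OF a nl]
    by blast
  have T0: "t0 \<in> carrier_mat n n" and dt0: "det t0 \<noteq> 0"
    using t0 unfolding mirahoric_def GLn_O_def by auto
  note I = adj_inverse[OF T0 dt0]
  have wG: "w \<in> GLn_O v n" unfolding w_def
    using GLn_O_mult[OF val] adj_inverse_GLn_O[OF val] a t0 unfolding mirahoric_def by blast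
  have "w $$ (n - 1, k) = (t0 * adj_inverse t0) $$ (n - 1, k)" if k: "k < n" for k
    unfolding w_def mult_mat_entry[OF A I(1) nl k] mult_mat_entry[OF T0 I(1) nl k]
    by (simp add: t0_def last_row_mat_def nl)
  then have "w \<in> mirahoric v n \<infinity>"
    using wG I(2) nl unfolding mirahoric_def by simp
  moreover have "w * t0 = a * (adj_inverse t0 * t0)"
    unfolding w_def using A I(1) T0 by simp
  then have "a = w * t0"
    using A mat_mult_left_right_inverse[OF T0 I(1) I(2)] by simp
  ultimately show ?thesis unfolding t0_def by blast
qed

end

section \<open>The elements \<alpha>_j\<close>

lemma alpha_carrier: "alpha unif n j \<in> carrier_mat n n"
  unfolding alpha_def by simp

lemma alpha_right:
  fixes A :: "'f::field mat"
  assumes A: "A \<in> carrier_mat n n" and ik: "i < n" "k < n"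
  shows "(A * alpha unif n j) $$ (i, k) = A $$ (i, k) * (if k < j then unif else 1)"
proof -
  have "(A * alpha unif n j) $$ (i, k) = (\<Sum>l<n. A $$ (i, l) * alpha unif n j $$ (l, k))"
    by (rule mult_mat_entry[OF A alpha_carrier ik])
  also have "\<dots> = (\<Sum>l<n. if l = k then A $$ (i, l) * (if l < j then unif else 1) else 0)"
    by (rule sum.cong) (auto simp: alpha_def ik)
  also have "\<dots> = A $$ (i, k) * (if k < j then unif else 1)" using ik by (simp add: sum.delta')
  finally show ?thesis .
qed

lemma alpha_left:
  fixes A :: "'f::field mat"
  assumes A: "A \<in> carrier_mat n n" and ik: "i < n" "k < n"
  shows "(alpha unif n j * A) $$ (i, k) = (if i < j then unif else 1) * A $$ (i, k)"
proof -
  have "(alpha unif n j * A) $$ (i, k) = (\<Sum>l<n. alpha unif n j $$ (i, l) * A $$ (l, k))"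
    by (rule mult_mat_entry[OF alpha_carrier A ik])
  also have "\<dots> = (\<Sum>l<n. if l = i then (if l < j then unif else 1) * A $$ (l, k) else 0)"
    by (rule sum.cong) (auto simp: alpha_def ik)
  also have "\<dots> = (if i < j then unif else 1) * A $$ (i, k)" using ik by (simp add: sum.delta')
  finally show ?thesis .
qed

lemma alpha_GLn:
  assumes "(unif::'f::field) \<noteq> 0"
  shows "alpha unif n j \<in> GLn n"
proof -
  have "det (alpha unif n j) = prod_list (diag_mat (alpha unif n j))"
    by (rule det_upper_triangular[OF _ alpha_carrier]) (auto simp: alpha_def)
  also have "\<dots> = (\<Prod>i = 0..<n. (if i < j then unif else 1))"
    unfolding prod_list_diag_prod by (simp add: alpha_def)
  finally have "det (alpha unif n j) \<noteq> 0" using assms by simp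
  then show ?thesis unfolding GLn_def using alpha_carrier by auto
qed

text \<open>Conjugating by \<alpha>_j rescales the last row: this is how the factorization
  of U \<alpha>_j U is obtained.\<close>

lemma last_row_mat_alpha:
  assumes j: "j \<le> n - 1"
  shows "last_row_mat n c * alpha unif n j
    = alpha unif n j * last_row_mat n (\<lambda>k. c k * (if k < j then unif else 1))"
  (is "?L = ?R")
proof (rule eq_matI)
  fix i k assume "i < dim_row ?R" "k < dim_col ?R"
  then have ik: "i < n" "k < n"
    by (auto simp: last_row_mat_def alpha_def)
  show "?L $$ (i, k) = ?R $$ (i, k)"
    unfolding alpha_right[OF last_row_mat_carrier ik] alpha_left[OF last_row_mat_carrier ik]
    using ik j by (auto simp: last_row_mat_def)
qed (auto simp: last_row_mat_def alpha_def)

context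
  fixes v :: "'f::field \<Rightarrow> int" and n :: nat and unif :: 'f and j :: nat
  assumes val: "valuation v" and n: "1 \<le> n" and unif: "unif \<in> val_ring v"
    and j: "j \<le> n - 1"
begin

lemma mirahoric_alpha_conj:
  assumes m: "m \<in> mirahoric v n s" and u: "u \<in> mirahoric v n s'"
    and eq: "m * alpha unif n j = alpha unif n j * u"
  shows "u \<in> mirahoric v n s"
proof -
  have M: "m \<in> carrier_mat n n" and U: "u \<in> carrier_mat n n"
    using mirahoric_carrier[OF val n] m u by auto
  have "u $$ (n - 1, k) - (if k = n - 1 then 1 else 0) \<in> val_ideal v s" if k: "k < n" for k
  proof -
    have nl: "n - 1 < n" using n by simp
    have "(m * alpha unif n j) $$ (n - 1, k) = (alpha unif n j * u) $$ (n - 1, k)" using eq by simp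
    then have e: "u $$ (n - 1, k) = m $$ (n - 1, k) * (if k < j then unif else 1)"
      unfolding alpha_right[OF M nl k] alpha_left[OF U nl k] using j by simp
    have mk: "m $$ (n - 1, k) - (if k = n - 1 then 1 else 0) \<in> val_ideal v s"
      using m k unfolding mirahoric_def by auto
    show ?thesis
    proof (cases "k < j")
      case True
      then have "k \<noteq> n - 1" using j by simp
      then show ?thesis using e True mk val_ideal_mult[OF val _ unif] by simp
    qed (use e mk in simp)
  qed
  then show ?thesis using u unfolding mirahoric_def by auto
qed

text \<open>Every a \<alpha>_j with a of level r factors as w \<alpha>_j t with w of infinite level
  and t of level r; hence the double coset U \<alpha>_j U is covered by W \<alpha>_j U.\<close>

lemma mirahoric_alpha_factor:
  assumes a: "a \<in> mirahoric v n (enat r)" and r: "1 \<le> r"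
  shows "\<exists>w\<in>mirahoric v n \<infinity>. \<exists>t\<in>mirahoric v n (enat r).
    a * alpha unif n j = w * alpha unif n j * t"
proof -
  let ?d = "\<lambda>k. if k < j then unif else (1::'f)"
  define t where "t = last_row_mat n (\<lambda>k. a $$ (n - 1, k) * ?d k)"
  have nl: "n - 1 < n" using n by simp
  obtain w where w: "w \<in> mirahoric v n \<infinity>"
    and aw: "a = w * last_row_mat n (\<lambda>k. a $$ (n - 1, k))"
    using mirahoric_last_row_factor[OF val n a r] by blast
  have t: "t \<in> mirahoric v n (enat r)" unfolding t_def
  proof (rule last_row_mat_mirahoric[OF val n r])
    fix k assume k: "k < n"
    show "a $$ (n - 1, k) * ?d k \<in> val_ring v"
      using mirahoric_integral[OF val n a nl k] unif val_ring_one[OF val]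
      by (auto intro: val_ring_mult[OF val])
    have "a $$ (n - 1, k) - (if k = n - 1 then 1 else 0) \<in> val_ideal v (enat r)"
      using a k unfolding mirahoric_def by auto
    then show "a $$ (n - 1, k) * ?d k - (if k = n - 1 then 1 else 0) \<in> val_ideal v (enat r)"
      using val_ideal_mult[OF val _ unif] j by (cases "k < j") auto
  qed
  have W: "w \<in> carrier_mat n n" by (rule mirahoric_carrier[OF val n w])
  have "a * alpha unif n j = w * (last_row_mat n (\<lambda>k. a $$ (n - 1, k)) * alpha unif n j)"
    using aw assoc_mult_mat[OF W last_row_mat_carrier alpha_carrier] by metis
  also have "\<dots> = w * (alpha unif n j * t)"
    unfolding t_def last_row_mat_alpha[OF j] ..
  also have "\<dots> = w * alpha unif n j * t"
    using assoc_mult_mat[OF W alpha_carrier last_row_mat_carrier] unfolding t_def by simp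
  finally show ?thesis using w t by blast
qed


end

text \<open>Torsion-freeness passes to quotients of invariants: if a x is invariant under U
  and a is not a zero-divisor, then x itself is U-invariant.\<close>

lemma invariant_of_scaled_invariant:
  assumes md: "Modules.module sm"
    and comm: "\<forall>g\<in>G. \<forall>a x. act g (sm a x) = sm a (act g x)"
    and tf: "torsion_free sm UNIV" and UG: "U \<subseteq> G"
    and ax: "sm a x \<in> invariants act U" and a: "\<not> zero_divisor a"
  shows "x \<in> invariants act U"
  unfolding invariants_def
proof (intro CollectI ballI)
  fix u assume u: "u \<in> U"
  have "sm a (act u x - x) = act u (sm a x) - sm a x"
    using module.scale_right_diff_distrib[OF md] comm u UG by auto
  also have "\<dots> = 0" using ax u unfolding invariants_def by simp
  finally have "act u x - x = 0" using tf a unfolding torsion_free_def by blast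
  then show "act u x = x" by simp
qed

theorem lemma2:
  fixes p l n r :: nat and s :: enat
    and v :: "'f::field_char_0 \<Rightarrow> int" and unif :: 'f
    and w :: "'k::field_char_0 \<Rightarrow> int" and \<iota> :: "'k \<Rightarrow> 'a::comm_ring_1"
    and sm :: "'a \<Rightarrow> 'v::ab_group_add \<Rightarrow> 'v" and act :: "'f mat \<Rightarrow> 'v \<Rightarrow> 'v"
  assumes F: "p_adic_local_field p v" and uni: "unif \<noteq> 0" "v unif = 1"
    and K: "p_adic_local_field l w" and lp: "l \<noteq> p"
    and banal: "\<not> l dvd gl_card (residue_card v) n"
    and Aalg: "O_algebra w \<iota>"
    and n: "1 \<le> n"
    and V: "smooth_rep v n sm act"
    and rs: "0 < r" "enat r \<le> s"
  shows "invariants act (U1 v n (enat r)) \<subseteq> invariants act (U1 v n s)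
    \<and> (\<forall>j\<in>{1..n-1}. \<forall>x\<in>invariants act (U1 v n (enat r)).
          hecke act (U1 v n (enat r)) (alpha unif n j) x = hecke act (U1 v n s) (alpha unif n j) x)
    \<and> (torsion_free sm UNIV \<longrightarrow>
        (\<forall>a. \<forall>x\<in>invariants act (U1 v n s).
           sm a x \<in> invariants act (U1 v n (enat r)) \<longrightarrow>
           x \<in> invariants act (U1 v n (enat r)) \<or> zero_divisor a))"
proof -
  have val: "valuation v" by (rule valuation_of_local_field[OF F])
  have unif: "unif \<in> val_ring v" using uni unfolding val_ring_def by simp
  have r: "1 \<le> r" using rs(1) by simp
  let ?U = "mirahoric v n (enat r)" and ?W = "mirahoric v n s"
  have U: "mat_subgroup n ?U" and W: "mat_subgroup n ?W"
    by (rule mirahoric_subgroup[OF val n])+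
  have WU: "?W \<subseteq> ?U" by (rule mirahoric_antimono[OF rs(2)])
  have law: "\<forall>g\<in>GLn n. \<forall>h\<in>GLn n. \<forall>x. act (g * h) x = act g (act h x)"
    and comm: "\<forall>g\<in>GLn n. \<forall>a x. act g (sm a x) = sm a (act g x)"
    and md: "Modules.module sm"
    using V unfolding smooth_rep_def by blast+
  have hecke: "hecke act ?U (alpha unif n j) x = hecke act ?W (alpha unif n j) x"
    if j: "j \<in> {1..n-1}" and x: "x \<in> invariants act ?U" for j x
  proof (rule hecke_restrict[OF W U WU alpha_GLn[OF uni(1)] _ _ law x])
    have j: "j \<le> n - 1" using j by simp
    show "u \<in> ?W" if "m \<in> ?W" "u \<in> ?U" "m * alpha unif n j = alpha unif n j * u" for m u
      using mirahoric_alpha_conj[OF val n unif j that] .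
    show "\<exists>w\<in>?W. \<exists>t\<in>?U. a * alpha unif n j = w * alpha unif n j * t" if "a \<in> ?U" for a
      using mirahoric_alpha_factor[OF val n unif j that r] mirahoric_antimono[of s \<infinity>] by auto
  qed
  have "x \<in> invariants act ?U"
    if "torsion_free sm UNIV" "sm a x \<in> invariants act ?U" "\<not> zero_divisor a" for a x
    using invariant_of_scaled_invariant[OF md comm that(1) _ that(2,3)]
      subgroup_GLn[OF U] by blast
  then show ?thesis
    unfolding U1_eq_mirahoric using WU hecke unfolding invariants_def by blast
qed

end
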